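(* Let $(A,+,\circ)$ be a finite skew brace and let $(A,r_A)$ be its associated sb-solution. If $A$ is supersoluble, then the solution $(A,r_A)$ is supersoluble at $0$ (i.e. $(A,r_A)$ is a supersoluble sb-solution).
   Context: A skew brace is a set $A$ with two group structures $(A,+)$ and $(A,\circ)$ such that $a\circ(b+c)=a\circ b-a+a\circ c$ for all $a,b,c\in A$; the identities of both groups coincide and are denoted $0$. For $a\in A$ put $\lambda_a(b)=-a+a\circ b$; then $\lambda_a\in\mathrm{Aut}(A,+)$ and $a\mapsto\lambda_a$ is a homomorphism from $(A,\circ)$. An ideal of $A$ is a subgroup $I$ of $(A,+)$ with $\lambda_a(I)=I$ for all $a$, normal in both $(A,+)$ and $(A,\circ)$. A finite skew brace is supersoluble if there is a chain of ideals $\{0\}=I_0\subseteq I_1\subseteq\dots\subseteq I_m=A$ with $|I_{i+1}/I_i|$ prime for all $i$. A solution of the Yang--Baxter equation is a pair $(X,r)$ with $r(x,y)=(\lambda_x(y),\rho_y(x))$ a bijection of $X\times X$ satisfying $r_{12}r_{23}r_{12}=r_{23}r_{12}r_{23}$ (where $r_{12}=r\times\mathrm{id}_X$, $r_{23}=\mathrm{id}_X\times r$), with all $\lambda_x,\rho_x$ bijective. The sb-solution associated with $A$ is $(A,r_A)$ with $r_A(a,b)=(\lambda_a(b),\lambda_a(b)^{-1}\circ a\circ b)$, where $^{-1}$ is the inverse in $(A,\circ)$. A solution $(X,r)$ is trivial if $|X|\ge 2$ and $r(x,y)=(y,x)$. A morphism $f:(X,r)\to(Y,s)$ of solutions is a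 map $f:X\to Y$ with $(f\times f)\circ r=s\circ(f\times f)$; write $x\sim_f y$ iff $f(x)=f(y)$. If $Z\subseteq X$ satisfies $\lambda_x(Z)=Z=\rho_x(Z)$ for all $x\in X$, then $s$ restricts to a solution on $f(Z)$. A finite solution $(X,r)$ is supersoluble at $x_0\in X$ if there is a chain of subsets $\{x_0\}=X_0\subseteq X_1\subseteq\dots\subseteq X_m=X$ and, for each $i=0,\dots,m-1$, a solution $(Y_i,s_i)$ and a morphism $f_i:(X,r)\to(Y_i,s_i)$ such that: (1) $X_i$ is an equivalence class of $\sim_{f_i}$; (2) all equivalence classes of $\sim_{f_i}$ have size $|X_i|$; (3) $X_{i+1}$ is a union of equivalence classes of $\sim_{f_i}$; (4) $\lambda_x(X_{i+1})=X_{i+1}$ and $\rho_x(X_{i+1})=X_{i+1}$ for all $x\in X$; (5) the restriction of $s_i$ to $f_i(X_{i+1})\times f_i(X_{i+1})$ is a trivial solution on $f_i(X_{i+1})$ of prime cardinality. An sb-solution $(A,r_A)$ is called supersoluble if it is supersoluble at $0$. *)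

theory Defs
  imports "HOL-Algebra.Coset" "HOL-Computational_Algebra.Primes"
begin

definition add_grp :: "'a set \<Rightarrow> ('a \<Rightarrow> 'a \<Rightarrow> 'a) \<Rightarrow> 'a \<Rightarrow> 'a monoid" where
  "add_grp A add zero = \<lparr>carrier = A, monoid.mult = add, one = zero\<rparr>"

definition mul_grp :: "'a set \<Rightarrow> ('a \<Rightarrow> 'a \<Rightarrow> 'a) \<Rightarrow> 'a \<Rightarrow> 'a monoid" where
  "mul_grp A mul zero = \<lparr>carrier = A, monoid.mult = mul, one = zero\<rparr>"

definition skew_brace :: "'a set \<Rightarrow> ('a \<Rightarrow> 'a \<Rightarrow> 'a) \<Rightarrow> ('a \<Rightarrow> 'a \<Rightarrow> 'a) \<Rightarrow> 'a \<Rightarrow> bool" where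
  "skew_brace A add mul zero \<longleftrightarrow>
     group (add_grp A add zero) \<and> group (mul_grp A mul zero) \<and>
     (\<forall>a\<in>A. \<forall>b\<in>A. \<forall>c\<in>A.
        mul a (add b c) = add (mul a b) (add (inv\<^bsub>add_grp A add zero\<^esub> a) (mul a c)))"

definition brace_lambda :: "'a set \<Rightarrow> ('a \<Rightarrow> 'a \<Rightarrow> 'a) \<Rightarrow> ('a \<Rightarrow> 'a \<Rightarrow> 'a) \<Rightarrow> 'a \<Rightarrow> 'a \<Rightarrow> 'a \<Rightarrow> 'a" where
  "brace_lambda A add mul zero a b = add (inv\<^bsub>add_grp A add zero\<^esub> a) (mul a b)"

definition brace_ideal :: "'a set \<Rightarrow> ('a \<Rightarrow> 'a \<Rightarrow> 'a) \<Rightarrow> ('a \<Rightarrow> 'a \<Rightarrow> 'a) \<Rightarrow> 'a \<Rightarrow> 'a set \<Rightarrow> bool" where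
  "brace_ideal A add mul zero I \<longleftrightarrow>
     subgroup I (add_grp A add zero) \<and>
     (\<forall>a\<in>A. brace_lambda A add mul zero a ` I = I) \<and>
     I \<lhd> add_grp A add zero \<and> I \<lhd> mul_grp A mul zero"

definition supersoluble_brace :: "'a set \<Rightarrow> ('a \<Rightarrow> 'a \<Rightarrow> 'a) \<Rightarrow> ('a \<Rightarrow> 'a \<Rightarrow> 'a) \<Rightarrow> 'a \<Rightarrow> bool" where
  "supersoluble_brace A add mul zero \<longleftrightarrow>
     finite A \<and>
     (\<exists>(I :: nat \<Rightarrow> 'a set) m. I 0 = {zero} \<and> I m = A \<and>
        (\<forall>i\<le>m. brace_ideal A add mul zero (I i)) \<and>
        (\<forall>i<m. I i \<subseteq> I (Suc i) \<and> prime (card (I (Suc i)) div card (I i))))"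

definition sol_lambda :: "('a \<times> 'a \<Rightarrow> 'a \<times> 'a) \<Rightarrow> 'a \<Rightarrow> 'a \<Rightarrow> 'a" where
  "sol_lambda r x y = fst (r (x, y))"

definition sol_rho :: "('a \<times> 'a \<Rightarrow> 'a \<times> 'a) \<Rightarrow> 'a \<Rightarrow> 'a \<Rightarrow> 'a" where
  "sol_rho r y x = snd (r (x, y))"

definition r12 :: "('a \<times> 'a \<Rightarrow> 'a \<times> 'a) \<Rightarrow> 'a \<times> 'a \<times> 'a \<Rightarrow> 'a \<times> 'a \<times> 'a" where
  "r12 r t = (case t of (x, y, z) \<Rightarrow> (let (u, v) = r (x, y) in (u, v, z)))"

definition r23 :: "('a \<times> 'a \<Rightarrow> 'a \<times> 'a) \<Rightarrow> 'a \<times> 'a \<times> 'a \<Rightarrow> 'a \<times> 'a \<times> 'a" where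
  "r23 r t = (case t of (x, y, z) \<Rightarrow> (let (v, w) = r (y, z) in (x, v, w)))"

definition solution :: "'a set \<Rightarrow> ('a \<times> 'a \<Rightarrow> 'a \<times> 'a) \<Rightarrow> bool" where
  "solution X r \<longleftrightarrow>
     bij_betw r (X \<times> X) (X \<times> X) \<and>
     (\<forall>x\<in>X. \<forall>y\<in>X. \<forall>z\<in>X.
        r12 r (r23 r (r12 r (x, y, z))) = r23 r (r12 r (r23 r (x, y, z)))) \<and>
     (\<forall>x\<in>X. bij_betw (sol_lambda r x) X X) \<and>
     (\<forall>x\<in>X. bij_betw (sol_rho r x) X X)"

definition trivial_solution :: "'a set \<Rightarrow> ('a \<times> 'a \<Rightarrow> 'a \<times> 'a) \<Rightarrow> bool" where
  "trivial_solution X r \<longleftrightarrow> 2 \<le> card X \<and> (\<forall>x\<in>X. \<forall>y\<in>X. r (x, y) = (y, x))"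

definition sol_morphism :: "'a set \<Rightarrow> ('a \<times> 'a \<Rightarrow> 'a \<times> 'a) \<Rightarrow> 'b set \<Rightarrow> ('b \<times> 'b \<Rightarrow> 'b \<times> 'b) \<Rightarrow> ('a \<Rightarrow> 'b) \<Rightarrow> bool" where
  "sol_morphism X r Y s f \<longleftrightarrow>
     f ` X \<subseteq> Y \<and>
     (\<forall>x\<in>X. \<forall>y\<in>X. map_prod f f (r (x, y)) = s (f x, f y))"

definition fclass :: "'a set \<Rightarrow> ('a \<Rightarrow> 'b) \<Rightarrow> 'a \<Rightarrow> 'a set" where
  "fclass X f x = {y \<in> X. f y = f x}"

definition supersoluble_at :: "'a set \<Rightarrow> ('a \<times> 'a \<Rightarrow> 'a \<times> 'a) \<Rightarrow> 'a \<Rightarrow> bool" where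
  "supersoluble_at X r x0 \<longleftrightarrow>
     finite X \<and> solution X r \<and> x0 \<in> X \<and>
     (\<exists>(Xs :: nat \<Rightarrow> 'a set) m (Ys :: nat \<Rightarrow> 'a set set)
        (ss :: nat \<Rightarrow> 'a set \<times> 'a set \<Rightarrow> 'a set \<times> 'a set) (fs :: nat \<Rightarrow> 'a \<Rightarrow> 'a set).
        Xs 0 = {x0} \<and> Xs m = X \<and>
        (\<forall>i<m. Xs i \<subseteq> Xs (Suc i)) \<and>
        (\<forall>i<m.
           solution (Ys i) (ss i) \<and> sol_morphism X r (Ys i) (ss i) (fs i) \<and>
           (\<exists>x\<in>X. Xs i = fclass X (fs i) x) \<and>
           (\<forall>x\<in>X. card (fclass X (fs i) x) = card (Xs i)) \<and>
           (\<forall>x\<in>Xs (Suc i). fclass X (fs i) x \<subseteq> Xs (Suc i)) \<and>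
           Xs (Suc i) \<subseteq> X \<and>
           (\<forall>x\<in>X. sol_lambda r x ` Xs (Suc i) = Xs (Suc i) \<and>
                   sol_rho r x ` Xs (Suc i) = Xs (Suc i)) \<and>
           prime (card (fs i ` Xs (Suc i))) \<and>
           trivial_solution (fs i ` Xs (Suc i)) (ss i)))"

definition sb_solution :: "'a set \<Rightarrow> ('a \<Rightarrow> 'a \<Rightarrow> 'a) \<Rightarrow> ('a \<Rightarrow> 'a \<Rightarrow> 'a) \<Rightarrow> 'a \<Rightarrow> 'a \<times> 'a \<Rightarrow> 'a \<times> 'a" where
  "sb_solution A add mul zero p =
     (case p of (a, b) \<Rightarrow>
        (brace_lambda A add mul zero a b,
         mul (mul (inv\<^bsub>mul_grp A mul zero\<^esub> (brace_lambda A add mul zero a b)) a) b))"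

end

theory Submission
  imports Defs "HOL-Algebra.Multiplicative_Group"
begin

(* Let I \<subseteq> J be consecutive ideals of the chain, with |J/I| = p prime. Congruence modulo an
   ideal is compatible with lambda and rho, so the sb-solution descends to the set A/I of classes
   x + I, and J is invariant under all lambda_x and rho_x. The p classes contained in J form a
   trivial subsolution: for a \<in> J, lambda_a and conjugation by a induce permutations of J/I that
   fix the class I and have trivial p-th power, because a^p \<in> I by Lagrange's theorem in J/I;
   such a permutation of a set of prime size p is the identity. Hence lambda_a(b) \<equiv> b and
   rho_b(a) = lambda_a(b)^-1 o a o b \<equiv> b^-1 o a o b \<equiv> a modulo I, and the chain of ideals is
   the chain required by supersolubility at 0. *)

section \<open>Periodic maps on sets of prime size\<close>

lemma funpow_gcd_fixed: "(f ^^ m) x = x \<Longrightarrow> (f ^^ n) x = x \<Longrightarrow> (f ^^ gcd m n) x = x"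
proof (induction m n rule: gcd_nat_induct)
  case (step m n)
  then show ?case using funpow_mod_eq[OF step.prems(2), of m] by (simp add: gcd_non_0_nat)
qed simp

lemma funpow_diff_fixed:
  assumes per: "(f ^^ p) x = x" and "i \<le> j" "j \<le> p" and eq: "(f ^^ i) x = (f ^^ j) x"
  shows "(f ^^ (j - i)) x = x"
proof -
  have "(f ^^ (j - i)) x = (f ^^ (j - i)) ((f ^^ p) x)"
    using per by simp
  also have "\<dots> = (f ^^ (p - i + j)) x"
    using assms(2,3) by (simp flip: comp_apply[of "f ^^ _"] funpow_add add: add.commute)
  also have "\<dots> = (f ^^ (p - i + i)) x"
    using eq by (simp add: funpow_add)
  finally show ?thesis using per assms(2,3) by simp
qed

lemma funpow_fixed_point: "f x = x \<Longrightarrow> (f ^^ n) x = x"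
  by (induction n) simp_all

lemma funpow_closed: "(\<And>x. x \<in> S \<Longrightarrow> f x \<in> S) \<Longrightarrow> x \<in> S \<Longrightarrow> (f ^^ k) x \<in> S"
  by (induction k) auto

lemma inj_on_funpow_prime_period:
  assumes p: "prime p" and per: "(f ^^ p) x = x" and moved: "f x \<noteq> x"
  shows "inj_on (\<lambda>k. (f ^^ k) x) {..<p}"
proof (rule linorder_inj_onI)
  fix i j assume ij: "i < j" "i \<in> {..<p}" "j \<in> {..<p}"
  show "(f ^^ i) x \<noteq> (f ^^ j) x"
  proof
    assume "(f ^^ i) x = (f ^^ j) x"
    then have "(f ^^ (j - i)) x = x" using ij by (intro funpow_diff_fixed[OF per]) auto
    then have "(f ^^ gcd (j - i) p) x = x" using per by (rule funpow_gcd_fixed)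
    moreover have "coprime (j - i) p"
      using ij p prime_imp_coprime[of p "j - i"] nat_dvd_not_less[of "j - i" p]
      by (simp add: coprime_commute)
    ultimately show False using moved by (simp add: coprime_iff_gcd_eq_1)
  qed
qed auto

(* If f x \<noteq> x, the orbit of x would consist of p distinct points of S - {s0}. *)
lemma prime_card_periodic_map_fixed:
  assumes fin: "finite S" and p: "prime (card S)"
    and s0: "s0 \<in> S" "f s0 = s0" and closed: "\<And>x. x \<in> S \<Longrightarrow> f x \<in> S"
    and per: "\<And>x. x \<in> S \<Longrightarrow> (f ^^ card S) x = x" and x: "x \<in> S"
  shows "f x = x"
proof (rule ccontr)
  assume moved: "f x \<noteq> x"
  let ?p = "card S"
  have "(\<lambda>k. (f ^^ k) x) ` {..<?p} \<subseteq> S - {s0}"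
  proof (intro image_subsetI DiffI)
    fix k assume "k \<in> {..<?p}"
    show "(f ^^ k) x \<in> S" using closed x by (rule funpow_closed)
    show "(f ^^ k) x \<notin> {s0}"
    proof
      assume "(f ^^ k) x \<in> {s0}"
      have "x = (f ^^ (?p - k + k)) x" using per[OF x] \<open>k \<in> {..<?p}\<close> by simp
      also have "\<dots> = (f ^^ (?p - k)) s0"
        using \<open>(f ^^ k) x \<in> {s0}\<close> by (simp add: funpow_add del: le_add_diff_inverse2)
      also have "\<dots> = s0" using s0 funpow_fixed_point by metis
      finally show False using moved s0 by simp
    qed
  qed
  with inj_on_funpow_prime_period[OF p per[OF x] moved]
  have "card {..<?p} \<le> card (S - {s0})"
    using fin by (metis card_image card_mono finite_Diff)
  then show False using s0 fin prime_gt_0_nat[OF p] by (simp add: card_Diff_singleton)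
qed

section \<open>Quotients of solutions\<close>

definition quotient_solution ::
    "'a set \<Rightarrow> ('a \<times> 'a \<Rightarrow> 'a \<times> 'a) \<Rightarrow> ('a \<Rightarrow> 'b) \<Rightarrow> 'b \<times> 'b \<Rightarrow> 'b \<times> 'b" where
  "quotient_solution X r f p = map_prod f f (r (map_prod (inv_into X f) (inv_into X f) p))"

lemma solution_image: "solution X r \<Longrightarrow> r ` (X \<times> X) = X \<times> X"
  by (simp add: solution_def bij_betw_def)

lemma r12_closed: "r ` (X \<times> X) \<subseteq> X \<times> X \<Longrightarrow> t \<in> X \<times> X \<times> X \<Longrightarrow> r12 r t \<in> X \<times> X \<times> X"
  by (force simp: r12_def split: prod.splits)

lemma r23_closed: "r ` (X \<times> X) \<subseteq> X \<times> X \<Longrightarrow> t \<in> X \<times> X \<times> X \<Longrightarrow> r23 r t \<in> X \<times> X \<times> X"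
  by (force simp: r23_def split: prod.splits)

locale solution_congruence =
  fixes X :: "'a set" and r :: "'a \<times> 'a \<Rightarrow> 'a \<times> 'a" and f :: "'a \<Rightarrow> 'b"
  assumes finite: "finite X" and solution: "solution X r"
    and compatible: "\<And>x x' y y'. \<lbrakk>x \<in> X; x' \<in> X; y \<in> X; y' \<in> X; f x = f x'; f y = f y'\<rbrakk>
      \<Longrightarrow> map_prod f f (r (x, y)) = map_prod f f (r (x', y'))"
begin

abbreviation "s \<equiv> quotient_solution X r f"
abbreviation "f_triple \<equiv> map_prod f (map_prod f f)"

lemma quotient_solution_apply:
  "x \<in> X \<Longrightarrow> y \<in> X \<Longrightarrow> s (f x, f y) = map_prod f f (r (x, y))"
  unfolding quotient_solution_def by (auto intro!: compatible simp: inv_into_into f_inv_into_f)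

lemma sol_morphism_quotient: "sol_morphism X r (f ` X) s f"
  by (simp add: sol_morphism_def quotient_solution_apply)

lemma quotient_solution_image: "s ` (f ` X \<times> f ` X) = f ` X \<times> f ` X"
proof -
  have "map_prod f f ` r ` (X \<times> X) = f ` X \<times> f ` X"
    using solution_image[OF solution] by (simp add: map_prod_surj_on)
  moreover have "s ` map_prod f f ` (X \<times> X) = map_prod f f ` r ` (X \<times> X)"
    unfolding image_image by (rule image_cong) (auto simp: quotient_solution_apply)
  ultimately show ?thesis by (simp add: map_prod_surj_on)
qed

lemma r12_quotient:
  "t \<in> X \<times> X \<times> X \<Longrightarrow> r12 s (f_triple t) = f_triple (r12 r t)"
  by (auto simp: r12_def quotient_solution_apply split: prod.splits)

lemma r23_quotient:
  "t \<in> X \<times> X \<times> X \<Longrightarrow> r23 s (f_triple t) = f_triple (r23 r t)"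
  by (auto simp: r23_def quotient_solution_apply split: prod.splits)

lemma braid_quotient:
  assumes "u \<in> f ` X" "v \<in> f ` X" "w \<in> f ` X"
  shows "r12 s (r23 s (r12 s (u, v, w))) = r23 s (r12 s (r23 s (u, v, w)))"
proof -
  obtain t where t: "t \<in> X \<times> X \<times> X" "(u, v, w) = f_triple t"
    using assms by auto
  note closed = r12_closed[OF equalityD1[OF solution_image[OF solution]]]
    r23_closed[OF equalityD1[OF solution_image[OF solution]]]
  have "r12 s (r23 s (r12 s (u, v, w))) = f_triple (r12 r (r23 r (r12 r t)))"
    using t by (simp add: r12_quotient r23_quotient closed)
  also have "\<dots> = f_triple (r23 r (r12 r (r23 r t)))"
    using solution t by (auto simp: solution_def)
  also have "\<dots> = r23 s (r12 s (r23 s (u, v, w)))"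
    using t by (simp add: r12_quotient r23_quotient closed)
  finally show ?thesis .
qed

lemma quotient_bij_betw:
  assumes g: "bij_betw g X X" and comm: "\<And>y. y \<in> X \<Longrightarrow> g' (f y) = f (g y)"
  shows "bij_betw g' (f ` X) (f ` X)"
proof -
  have "g' ` f ` X = f ` g ` X" using comm by (auto simp: image_iff)
  also have "\<dots> = f ` X" using g by (simp add: bij_betw_def)
  finally show ?thesis using finite by (simp add: bij_betw_def finite_surj_inj)
qed

lemma solution_quotient: "solution (f ` X) s"
  unfolding solution_def
proof (intro conjI ballI)
  show "bij_betw s (f ` X \<times> f ` X) (f ` X \<times> f ` X)"
    using quotient_solution_image finite by (simp add: bij_betw_def finite_surj_inj)
next
  fix u v w assume "u \<in> f ` X" "v \<in> f ` X" "w \<in> f ` X"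
  then show "r12 s (r23 s (r12 s (u, v, w))) = r23 s (r12 s (r23 s (u, v, w)))"
    by (rule braid_quotient)
next
  fix u assume "u \<in> f ` X"
  then obtain x where x: "x \<in> X" "u = f x" by auto
  have lam: "bij_betw (sol_lambda r x) X X" and rho: "bij_betw (sol_rho r x) X X"
    using solution x by (auto simp: solution_def)
  show "bij_betw (sol_lambda s u) (f ` X) (f ` X)"
    by (rule quotient_bij_betw[OF lam]) (simp add: x sol_lambda_def quotient_solution_apply)
  show "bij_betw (sol_rho s u) (f ` X) (f ` X)"
    by (rule quotient_bij_betw[OF rho]) (simp add: x sol_rho_def quotient_solution_apply)
qed

end

definition supersoluble_layer :: "'a set \<Rightarrow> ('a \<times> 'a \<Rightarrow> 'a \<times> 'a) \<Rightarrow> 'a set \<Rightarrow> 'a set \<Rightarrow>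
    'b set \<Rightarrow> ('b \<times> 'b \<Rightarrow> 'b \<times> 'b) \<Rightarrow> ('a \<Rightarrow> 'b) \<Rightarrow> bool" where
  "supersoluble_layer X r X\<^sub>0 X\<^sub>1 Y s f \<longleftrightarrow>
     solution Y s \<and> sol_morphism X r Y s f \<and>
     (\<exists>x\<in>X. X\<^sub>0 = fclass X f x) \<and> (\<forall>x\<in>X. card (fclass X f x) = card X\<^sub>0) \<and>
     (\<forall>x\<in>X\<^sub>1. fclass X f x \<subseteq> X\<^sub>1) \<and> X\<^sub>1 \<subseteq> X \<and>
     (\<forall>x\<in>X. sol_lambda r x ` X\<^sub>1 = X\<^sub>1 \<and> sol_rho r x ` X\<^sub>1 = X\<^sub>1) \<and>
     prime (card (f ` X\<^sub>1)) \<and> trivial_solution (f ` X\<^sub>1) s"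

lemma supersoluble_atI:
  fixes Ys :: "nat \<Rightarrow> 'a set set" and fs :: "nat \<Rightarrow> 'a \<Rightarrow> 'a set"
  assumes "finite X" "solution X r" "x\<^sub>0 \<in> X" "Xs 0 = {x\<^sub>0}" "Xs m = X"
    and "\<And>i. i < m \<Longrightarrow> Xs i \<subseteq> Xs (Suc i)"
    and "\<And>i. i < m \<Longrightarrow> supersoluble_layer X r (Xs i) (Xs (Suc i)) (Ys i) (ss i) (fs i)"
  shows "supersoluble_at X r x\<^sub>0"
  unfolding supersoluble_at_def using assms
  by (intro conjI exI[of _ Xs] exI[of _ m] exI[of _ Ys] exI[of _ ss] exI[of _ fs])
    (simp_all add: supersoluble_layer_def)

section \<open>Skew braces and their sb-solutions\<close>

lemma (in group) normal_cong_mult: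
  assumes N: "N \<lhd> G" and carr: "x \<in> carrier G" "x' \<in> carrier G" "y \<in> carrier G" "y' \<in> carrier G"
    and cong: "inv x \<otimes> x' \<in> N" "inv y \<otimes> y' \<in> N"
  shows "inv (x \<otimes> y) \<otimes> (x' \<otimes> y') \<in> N"
proof -
  have "inv (x \<otimes> y) \<otimes> (x' \<otimes> y') = (inv y \<otimes> (inv x \<otimes> x') \<otimes> y) \<otimes> (inv y \<otimes> y')"
    using carr by (simp add: inv_mult_group m_assoc) (metis inv_closed m_assoc r_inv l_one)
  moreover have "inv y \<otimes> (inv x \<otimes> x') \<otimes> y \<in> N"
    using normal.inv_op_closed1[OF N carr(3) cong(1)] .
  ultimately show ?thesis
    using cong(2) subgroup.m_closed[OF normal_imp_subgroup[OF N]] by simp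
qed

lemma (in group) normal_cong_inv:
  assumes N: "N \<lhd> G" and carr: "x \<in> carrier G" "x' \<in> carrier G" and cong: "inv x \<otimes> x' \<in> N"
  shows "inv (inv x) \<otimes> inv x' \<in> N"
proof -
  have "inv (inv x) \<otimes> inv x' = x \<otimes> inv (inv x \<otimes> x') \<otimes> inv x"
    using carr by (simp add: inv_mult_group m_assoc)
  moreover have "inv (inv x \<otimes> x') \<in> N"
    using subgroup.m_inv_closed[OF normal_imp_subgroup[OF N] cong] .
  ultimately show ?thesis using normal.inv_op_closed2[OF N carr(1)] by simp
qed

locale skew_brace_struct =
  fixes A :: "'a set" and add mul :: "'a \<Rightarrow> 'a \<Rightarrow> 'a" and zero :: 'a
  assumes skew_brace: "skew_brace A add mul zero"
begin

definition neg where "neg x = inv\<^bsub>add_grp A add zero\<^esub> x"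
definition minv where "minv x = inv\<^bsub>mul_grp A mul zero\<^esub> x"
abbreviation lam where "lam \<equiv> brace_lambda A add mul zero"
definition rho where "rho b a = mul (mul (minv (lam a b)) a) b"

lemma add_group: "group (add_grp A add zero)"
  using skew_brace by (simp add: skew_brace_def)
lemma mul_group: "group (mul_grp A mul zero)"
  using skew_brace by (simp add: skew_brace_def)

lemma add_grp_simps[simp]: "carrier (add_grp A add zero) = A"
  "monoid.mult (add_grp A add zero) = add" "one (add_grp A add zero) = zero"
  by (simp_all add: add_grp_def)
lemma mul_grp_simps[simp]: "carrier (mul_grp A mul zero) = A"
  "monoid.mult (mul_grp A mul zero) = mul" "one (mul_grp A mul zero) = zero"
  by (simp_all add: mul_grp_def)

lemma zero_closed[simp]: "zero \<in> A"
  using monoid.one_closed[OF group.is_monoid[OF add_group]] by simp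
lemma add_closed[simp]: "x \<in> A \<Longrightarrow> y \<in> A \<Longrightarrow> add x y \<in> A"
  using monoid.m_closed[OF group.is_monoid[OF add_group]] by fastforce
lemma mul_closed[simp]: "x \<in> A \<Longrightarrow> y \<in> A \<Longrightarrow> mul x y \<in> A"
  using monoid.m_closed[OF group.is_monoid[OF mul_group]] by fastforce
lemma neg_closed[simp]: "x \<in> A \<Longrightarrow> neg x \<in> A"
  using group.inv_closed[OF add_group] unfolding neg_def by fastforce
lemma minv_closed[simp]: "x \<in> A \<Longrightarrow> minv x \<in> A"
  using group.inv_closed[OF mul_group] unfolding minv_def by fastforce
lemma add_assoc[simp]: "x \<in> A \<Longrightarrow> y \<in> A \<Longrightarrow> z \<in> A \<Longrightarrow> add (add x y) z = add x (add y z)"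
  using monoid.m_assoc[OF group.is_monoid[OF add_group]] by fastforce
lemma mul_assoc[simp]: "x \<in> A \<Longrightarrow> y \<in> A \<Longrightarrow> z \<in> A \<Longrightarrow> mul (mul x y) z = mul x (mul y z)"
  using monoid.m_assoc[OF group.is_monoid[OF mul_group]] by fastforce
lemma add_zero[simp]: "x \<in> A \<Longrightarrow> add zero x = x" "x \<in> A \<Longrightarrow> add x zero = x"
  using monoid.l_one[OF group.is_monoid[OF add_group]] monoid.r_one[OF group.is_monoid[OF add_group]]
  by fastforce+
lemma mul_zero[simp]: "x \<in> A \<Longrightarrow> mul zero x = x" "x \<in> A \<Longrightarrow> mul x zero = x"
  using monoid.l_one[OF group.is_monoid[OF mul_group]] monoid.r_one[OF group.is_monoid[OF mul_group]]
  by fastforce+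
lemma add_neg[simp]: "x \<in> A \<Longrightarrow> add (neg x) x = zero" "x \<in> A \<Longrightarrow> add x (neg x) = zero"
  using group.l_inv[OF add_group] group.r_inv[OF add_group] unfolding neg_def by fastforce+
lemma mul_minv[simp]: "x \<in> A \<Longrightarrow> mul (minv x) x = zero" "x \<in> A \<Longrightarrow> mul x (minv x) = zero"
  using group.l_inv[OF mul_group] group.r_inv[OF mul_group] unfolding minv_def by fastforce+
lemma add_neg_cancel[simp]: "x \<in> A \<Longrightarrow> y \<in> A \<Longrightarrow> add (neg x) (add x y) = y"
  "x \<in> A \<Longrightarrow> y \<in> A \<Longrightarrow> add x (add (neg x) y) = y"
  by (metis add_zero(1) add_assoc add_neg neg_closed)+
lemma mul_minv_cancel[simp]: "x \<in> A \<Longrightarrow> y \<in> A \<Longrightarrow> mul (minv x) (mul x y) = y"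
  "x \<in> A \<Longrightarrow> y \<in> A \<Longrightarrow> mul x (mul (minv x) y) = y"
  by (metis mul_zero(1) mul_assoc mul_minv minv_closed)+
lemma neg_unique: "x \<in> A \<Longrightarrow> y \<in> A \<Longrightarrow> add x y = zero \<Longrightarrow> y = neg x"
  by (metis add_zero(2) add_neg_cancel(1) neg_closed)
lemma minv_unique: "x \<in> A \<Longrightarrow> y \<in> A \<Longrightarrow> mul x y = zero \<Longrightarrow> y = minv x"
  by (metis mul_zero(2) mul_minv_cancel(1) minv_closed)
lemma neg_neg[simp]: "x \<in> A \<Longrightarrow> neg (neg x) = x"
  by (metis add_neg(1) neg_closed neg_unique)
lemma minv_minv[simp]: "x \<in> A \<Longrightarrow> minv (minv x) = x"
  by (metis mul_minv(1) minv_closed minv_unique)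
lemma neg_zero[simp]: "neg zero = zero"
  by (metis add_zero(1) neg_unique zero_closed)
lemma minv_zero[simp]: "minv zero = zero"
  by (metis mul_zero(1) minv_unique zero_closed)
lemma neg_add[simp]: "x \<in> A \<Longrightarrow> y \<in> A \<Longrightarrow> neg (add x y) = add (neg y) (neg x)"
  by (metis add_closed add_neg(2) add_neg_cancel(1) add_assoc neg_closed neg_unique)
lemma minv_mul[simp]: "x \<in> A \<Longrightarrow> y \<in> A \<Longrightarrow> minv (mul x y) = mul (minv y) (minv x)"
  by (metis mul_closed mul_minv(2) mul_minv_cancel(1) mul_assoc minv_closed minv_unique)
lemma add_left_cancel: "x \<in> A \<Longrightarrow> y \<in> A \<Longrightarrow> z \<in> A \<Longrightarrow> add x y = add x z \<Longrightarrow> y = z"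
  by (metis add_neg_cancel(1))
lemma mul_left_cancel: "x \<in> A \<Longrightarrow> y \<in> A \<Longrightarrow> z \<in> A \<Longrightarrow> mul x y = mul x z \<Longrightarrow> y = z"
  by (metis mul_minv_cancel(1))
lemma add_right_cancel: "x \<in> A \<Longrightarrow> y \<in> A \<Longrightarrow> z \<in> A \<Longrightarrow> add y x = add z x \<Longrightarrow> y = z"
  by (metis add_zero(2) add_assoc add_neg(2) neg_closed)
lemma mul_right_cancel: "x \<in> A \<Longrightarrow> y \<in> A \<Longrightarrow> z \<in> A \<Longrightarrow> mul y x = mul z x \<Longrightarrow> y = z"
  by (metis mul_zero(2) mul_assoc mul_minv(2) minv_closed)

lemma brace_distrib:
  "a \<in> A \<Longrightarrow> b \<in> A \<Longrightarrow> c \<in> A \<Longrightarrow> mul a (add b c) = add (mul a b) (add (neg a) (mul a c))"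
  using skew_brace unfolding skew_brace_def neg_def by blast

lemma lam_eq: "lam a b = add (neg a) (mul a b)"
  unfolding brace_lambda_def neg_def by simp

lemma mul_eq_add_lam: "a \<in> A \<Longrightarrow> b \<in> A \<Longrightarrow> mul a b = add a (lam a b)"
  by (simp add: lam_eq)

lemma lam_closed[simp]: "a \<in> A \<Longrightarrow> b \<in> A \<Longrightarrow> lam a b \<in> A"
  by (simp add: lam_eq)
lemma rho_closed[simp]: "a \<in> A \<Longrightarrow> b \<in> A \<Longrightarrow> rho b a \<in> A"
  by (simp add: rho_def)

lemma lam_zero[simp]: "a \<in> A \<Longrightarrow> lam a zero = zero"
  by (simp add: lam_eq)
lemma lam_zero_left[simp]: "b \<in> A \<Longrightarrow> lam zero b = b"
  by (simp add: lam_eq)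

lemma lam_add: "a \<in> A \<Longrightarrow> b \<in> A \<Longrightarrow> c \<in> A \<Longrightarrow> lam a (add b c) = add (lam a b) (lam a c)"
  by (simp add: lam_eq brace_distrib)

lemma lam_neg: "a \<in> A \<Longrightarrow> b \<in> A \<Longrightarrow> lam a (neg b) = neg (lam a b)"
  using lam_add[of a b "neg b"] by (simp add: neg_unique)

lemma lam_mul: "a \<in> A \<Longrightarrow> b \<in> A \<Longrightarrow> c \<in> A \<Longrightarrow> lam (mul a b) c = lam a (lam b c)"
  by (simp add: lam_eq[of b c] lam_add lam_neg) (simp add: lam_eq)

lemma lam_minv[simp]: "a \<in> A \<Longrightarrow> b \<in> A \<Longrightarrow> lam (minv a) (lam a b) = b"
  by (simp flip: lam_mul)

lemma mul_lam_rho: "x \<in> A \<Longrightarrow> y \<in> A \<Longrightarrow> mul (lam x y) (rho y x) = mul x y"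
  by (simp add: rho_def)

lemma lam_mul_right:
  assumes "x \<in> A" "y \<in> A" "z \<in> A"
  shows "lam x (mul y z) = mul (lam x y) (lam (rho y x) z)"
proof -
  have "mul (lam x y) (lam (rho y x) z) = add (lam x y) (lam (lam x y) (lam (rho y x) z))"
    using assms by (simp only: mul_eq_add_lam lam_closed rho_closed)
  also have "\<dots> = add (lam x y) (lam (mul x y) z)"
    using assms by (simp add: mul_lam_rho flip: lam_mul)
  also have "\<dots> = lam x (add y (lam y z))"
    using assms by (simp add: lam_mul lam_add)
  finally show ?thesis using assms by (simp flip: mul_eq_add_lam)
qed

lemma rho_rho: "x \<in> A \<Longrightarrow> y \<in> A \<Longrightarrow> z \<in> A \<Longrightarrow> rho z (rho y x) = rho (mul y z) x"
  using lam_mul_right[of x y z] by (simp add: rho_def[of z "rho y x"] rho_def[of "mul y z" x]) (simp add: rho_def)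

lemma rho_zero[simp]: "x \<in> A \<Longrightarrow> rho zero x = x"
  by (simp add: rho_def)

lemma rho_of_zero[simp]: "x \<in> A \<Longrightarrow> rho x zero = zero"
  by (simp add: rho_def)

lemma rho_minv[simp]: "x \<in> A \<Longrightarrow> y \<in> A \<Longrightarrow> rho (minv y) (rho y x) = x"
  by (simp add: rho_rho)

lemma lam_bij: "x \<in> A \<Longrightarrow> bij_betw (lam x) A A"
  by (rule bij_betw_byWitness[where f'="lam (minv x)"]) (auto, metis lam_minv minv_closed minv_minv)

lemma rho_bij: "x \<in> A \<Longrightarrow> bij_betw (rho x) A A"
  by (rule bij_betw_byWitness[where f'="rho (minv x)"]) (auto, metis rho_minv minv_closed minv_minv)

abbreviation r where "r \<equiv> sb_solution A add mul zero"

lemma sb_solution_apply: "r (a, b) = (lam a b, rho b a)"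
  by (simp add: sb_solution_def rho_def minv_def)

lemma sol_lambda_sb_solution: "sol_lambda r x = lam x"
  by (simp add: fun_eq_iff sol_lambda_def sb_solution_apply)

lemma sol_rho_sb_solution: "sol_rho r x = rho x"
  by (simp add: fun_eq_iff sol_rho_def sb_solution_apply)

lemma sb_solution_image: "r ` (A \<times> A) \<subseteq> A \<times> A"
  by (auto simp: sb_solution_apply)

lemma inj_on_sb_solution: "inj_on r (A \<times> A)"
proof (rule inj_onI, clarify)
  fix x y x' y' assume A: "x \<in> A" "y \<in> A" "x' \<in> A" "y' \<in> A" and eq: "r (x, y) = r (x', y')"
  then have lam_xy: "lam x y = lam x' y'" and "rho y x = rho y' x'"
    by (auto simp: sb_solution_apply)
  then have prod: "mul x y = mul x' y'"
    using A by (metis mul_lam_rho)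
  then have "neg x = neg x'"
    using lam_xy A by (simp add: lam_eq) (metis add_right_cancel mul_closed neg_closed)
  then have "x = x'" using A by (metis neg_neg)
  then show "x = x' \<and> y = y'" using prod A mul_left_cancel by blast
qed

definition triple_product :: "'a \<times> 'a \<times> 'a \<Rightarrow> 'a" where
  "triple_product = (\<lambda>(u, v, w). mul u (mul v w))"

lemma triple_product_r12: "t \<in> A \<times> A \<times> A \<Longrightarrow> triple_product (r12 r t) = triple_product t"
  by (auto simp: triple_product_def r12_def sb_solution_apply mul_lam_rho simp flip: mul_assoc)

lemma triple_product_r23: "t \<in> A \<times> A \<times> A \<Longrightarrow> triple_product (r23 r t) = triple_product t"
  by (auto simp: triple_product_def r23_def sb_solution_apply mul_lam_rho)

(* The outer components agree by lam_mul and rho_rho; the middle ones then agree because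
   r12 and r23 preserve the product of a triple. *)
lemma braid_sb_solution:
  assumes A: "x \<in> A" "y \<in> A" "z \<in> A"
  shows "r12 r (r23 r (r12 r (x, y, z))) = r23 r (r12 r (r23 r (x, y, z)))"
proof -
  obtain u v w where L: "r12 r (r23 r (r12 r (x, y, z))) = (u, v, w)" by (metis prod_cases3)
  obtain u' v' w' where R: "r23 r (r12 r (r23 r (x, y, z))) = (u', v', w')" by (metis prod_cases3)
  note closed = r12_closed[OF sb_solution_image] r23_closed[OF sb_solution_image]
  have "u = lam (lam x y) (lam (rho y x) z)" "w = rho z (rho y x)"
    using L by (auto simp: r12_def r23_def sb_solution_apply)
  moreover have "u' = lam x (lam y z)" "w' = rho (rho z y) (rho (lam y z) x)"
    using R by (auto simp: r12_def r23_def sb_solution_apply)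
  ultimately have "u = u'" "w = w'"
    using A by (simp_all add: lam_mul[symmetric] rho_rho mul_lam_rho)
  moreover have "triple_product (u, v, w) = triple_product (u', v', w')"
    using A L R closed by (metis mem_Times_iff fst_conv snd_conv triple_product_r12 triple_product_r23)
  moreover have "u \<in> A" "v \<in> A" "v' \<in> A" "w \<in> A"
    using A L R closed by (metis mem_Times_iff fst_conv snd_conv)+
  ultimately have "v = v'"
    by (simp add: triple_product_def) (metis mul_left_cancel mul_right_cancel mul_closed)
  with L R \<open>u = u'\<close> \<open>w = w'\<close> show ?thesis by simp
qed

lemma solution_sb_solution:
  assumes "finite A"
  shows "solution A r"
  unfolding solution_def sol_lambda_sb_solution sol_rho_sb_solution
  using assms sb_solution_image inj_on_sb_solution braid_sb_solution lam_bij rho_bij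
  by (simp add: bij_betw_def endo_inj_surj)

section \<open>Congruence modulo an ideal\<close>

(* The additive left congruence; by ideal_cong_mul_iff it is also the multiplicative one, so it
   is compatible with both operations. *)
definition ideal_cong where "ideal_cong I x y \<longleftrightarrow> x \<in> A \<and> y \<in> A \<and> add (neg x) y \<in> I"

definition ideal_class where "ideal_class I x = {y \<in> A. ideal_cong I x y}"

definition quotient_map :: "'a set \<Rightarrow> ('a \<Rightarrow> 'a) \<Rightarrow> 'a set \<Rightarrow> 'a set" where
  "quotient_map I h C = ideal_class I (h (inv_into A (ideal_class I) C))"

context
  fixes I assumes ideal: "brace_ideal A add mul zero I"
begin

lemma ideal_add_normal: "I \<lhd> add_grp A add zero"
  using ideal by (simp add: brace_ideal_def)
lemma ideal_mul_normal: "I \<lhd> mul_grp A mul zero"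
  using ideal by (simp add: brace_ideal_def)
lemma ideal_add_subgroup: "subgroup I (add_grp A add zero)"
  using ideal_add_normal normal_imp_subgroup by blast
lemma ideal_mul_subgroup: "subgroup I (mul_grp A mul zero)"
  using ideal_mul_normal normal_imp_subgroup by blast
lemma ideal_subset: "I \<subseteq> A"
  using subgroup.subset[OF ideal_add_subgroup] by simp
lemma lam_image_ideal: "a \<in> A \<Longrightarrow> lam a ` I = I"
  using ideal by (simp add: brace_ideal_def)
lemma zero_in_ideal: "zero \<in> I"
  using subgroup.one_closed[OF ideal_add_subgroup] by simp
lemma ideal_add_closed: "x \<in> I \<Longrightarrow> y \<in> I \<Longrightarrow> add x y \<in> I"
  using subgroup.m_closed[OF ideal_add_subgroup] by fastforce
lemma ideal_mul_closed: "x \<in> I \<Longrightarrow> y \<in> I \<Longrightarrow> mul x y \<in> I"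
  using subgroup.m_closed[OF ideal_mul_subgroup] by fastforce
lemma ideal_minv_closed: "x \<in> I \<Longrightarrow> minv x \<in> I"
  using subgroup.m_inv_closed[OF ideal_mul_subgroup] unfolding minv_def by fastforce

lemma ideal_cong_iff_mul:
  assumes "x \<in> A" "y \<in> A"
  shows "add (neg x) y \<in> I \<longleftrightarrow> mul (minv x) y \<in> I"
proof -
  have "add (neg x) y = lam x (mul (minv x) y)" using assms by (simp add: lam_eq)
  moreover have "lam x u \<in> I \<longleftrightarrow> u \<in> I" if "u \<in> A" for u
    using lam_image_ideal[OF assms(1)] bij_betw_imp_inj_on[OF lam_bij[OF assms(1)]] that ideal_subset
    by (metis image_eqI inj_on_image_mem_iff)
  ultimately show ?thesis using assms by simp
qed

lemma ideal_cong_mul_iff: "ideal_cong I x y \<longleftrightarrow> x \<in> A \<and> y \<in> A \<and> mul (minv x) y \<in> I"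
  unfolding ideal_cong_def using ideal_cong_iff_mul by blast

lemma ideal_cong_closed: "ideal_cong I x y \<Longrightarrow> x \<in> A \<and> y \<in> A"
  by (simp add: ideal_cong_def)

lemma ideal_cong_refl: "x \<in> A \<Longrightarrow> ideal_cong I x x"
  by (simp add: ideal_cong_def zero_in_ideal)

lemma ideal_cong_sym: "ideal_cong I x y \<Longrightarrow> ideal_cong I y x"
  unfolding ideal_cong_def
  using subgroup.m_inv_closed[OF ideal_add_subgroup, of "add (neg x) y"] by (simp flip: neg_def)

lemma ideal_cong_trans: "ideal_cong I x y \<Longrightarrow> ideal_cong I y z \<Longrightarrow> ideal_cong I x z"
  unfolding ideal_cong_def using ideal_add_closed[of "add (neg x) y" "add (neg y) z"] by simp

lemma ideal_cong_zero_iff: "ideal_cong I zero y \<longleftrightarrow> y \<in> I"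
  unfolding ideal_cong_def using ideal_subset by auto

lemma ideal_cong_add: "ideal_cong I x x' \<Longrightarrow> ideal_cong I y y' \<Longrightarrow> ideal_cong I (add x y) (add x' y')"
  unfolding ideal_cong_def neg_def
  using group.normal_cong_mult[OF add_group ideal_add_normal, of x x' y y'] by simp

lemma ideal_cong_neg: "ideal_cong I x x' \<Longrightarrow> ideal_cong I (neg x) (neg x')"
  unfolding ideal_cong_def neg_def
  using group.normal_cong_inv[OF add_group ideal_add_normal, of x x'] by (simp flip: neg_def)

lemma ideal_cong_mul: "ideal_cong I x x' \<Longrightarrow> ideal_cong I y y' \<Longrightarrow> ideal_cong I (mul x y) (mul x' y')"
  unfolding ideal_cong_mul_iff minv_def
  using group.normal_cong_mult[OF mul_group ideal_mul_normal, of x x' y y'] by simp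

lemma ideal_cong_minv: "ideal_cong I x x' \<Longrightarrow> ideal_cong I (minv x) (minv x')"
  unfolding ideal_cong_mul_iff minv_def
  using group.normal_cong_inv[OF mul_group ideal_mul_normal, of x x'] by (simp flip: minv_def)

lemma ideal_cong_lam: "ideal_cong I a a' \<Longrightarrow> ideal_cong I b b' \<Longrightarrow> ideal_cong I (lam a b) (lam a' b')"
  unfolding lam_eq by (intro ideal_cong_add ideal_cong_neg ideal_cong_mul)

lemma ideal_cong_rho: "ideal_cong I a a' \<Longrightarrow> ideal_cong I b b' \<Longrightarrow> ideal_cong I (rho b a) (rho b' a')"
  unfolding rho_def by (intro ideal_cong_mul ideal_cong_minv ideal_cong_lam)

lemma rho_image_ideal_subset:
  assumes x: "x \<in> A"
  shows "rho x ` I \<subseteq> I"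
proof
  fix y assume "y \<in> rho x ` I"
  then obtain i where i: "i \<in> I" "y = rho x i" by auto
  then have "ideal_cong I zero i" by (simp add: ideal_cong_zero_iff)
  then have "ideal_cong I (rho x zero) (rho x i)" using ideal_cong_rho ideal_cong_refl x by blast
  then show "y \<in> I" using x i by (simp add: ideal_cong_zero_iff)
qed

lemma rho_image_ideal:
  assumes x: "x \<in> A"
  shows "rho x ` I = I"
proof
  show "rho x ` I \<subseteq> I" using x by (rule rho_image_ideal_subset)
  show "I \<subseteq> rho x ` I"
  proof
    fix i assume i: "i \<in> I"
    then have "rho (minv x) i \<in> I" using rho_image_ideal_subset[of "minv x"] x by auto
    moreover have "i = rho x (rho (minv x) i)"
      using x i ideal_subset rho_minv[of i "minv x"] by auto
    ultimately show "i \<in> rho x ` I" by blast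
  qed
qed

lemma ideal_class_eq_iff: "x \<in> A \<Longrightarrow> y \<in> A \<Longrightarrow> ideal_class I x = ideal_class I y \<longleftrightarrow> ideal_cong I x y"
  unfolding ideal_class_def using ideal_cong_refl ideal_cong_sym ideal_cong_trans by blast

lemma ideal_class_zero: "ideal_class I zero = I"
  unfolding ideal_class_def using ideal_cong_zero_iff ideal_subset by auto

lemma mem_ideal_class_self: "x \<in> A \<Longrightarrow> x \<in> ideal_class I x"
  by (simp add: ideal_class_def ideal_cong_refl)

lemma ideal_class_eq_add_image:
  assumes x: "x \<in> A"
  shows "ideal_class I x = add x ` I"
proof (intro equalityI subsetI)
  fix y assume "y \<in> ideal_class I x"
  then have "y \<in> A" "add (neg x) y \<in> I" by (auto simp: ideal_class_def ideal_cong_def)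
  then show "y \<in> add x ` I" using x by (metis add_neg_cancel(2) image_eqI)
next
  fix y assume "y \<in> add x ` I"
  then show "y \<in> ideal_class I x"
    using x ideal_subset by (auto simp: ideal_class_def ideal_cong_def)
qed

lemma card_ideal_class: "x \<in> A \<Longrightarrow> card (ideal_class I x) = card I"
  using ideal_subset add_left_cancel
  by (simp add: ideal_class_eq_add_image card_image inj_on_def subset_iff)

lemma fclass_ideal_class:
  assumes "x \<in> A"
  shows "fclass A (ideal_class I) x = ideal_class I x"
proof -
  have "ideal_class I y = ideal_class I x \<longleftrightarrow> ideal_cong I x y" if "y \<in> A" for y
    using ideal_class_eq_iff[OF that assms] ideal_cong_sym by blast
  then show ?thesis by (auto simp: fclass_def ideal_class_def[of I x])
qed

lemma ideal_class_disjoint: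
  assumes "x \<in> A" "y \<in> A" "ideal_class I x \<noteq> ideal_class I y"
  shows "ideal_class I x \<inter> ideal_class I y = {}"
proof (rule ccontr)
  assume "ideal_class I x \<inter> ideal_class I y \<noteq> {}"
  then obtain z where "ideal_cong I x z" "ideal_cong I y z" by (auto simp: ideal_class_def)
  then have "ideal_cong I x y" using ideal_cong_sym ideal_cong_trans by blast
  then show False using assms ideal_class_eq_iff by blast
qed

lemma solution_congruence_ideal_class:
  assumes "finite A"
  shows "solution_congruence A r (ideal_class I)"
proof
  show "finite A" "solution A r" using assms(1) solution_sb_solution by auto
  fix x x' y y' assume "x \<in> A" "x' \<in> A" "y \<in> A" "y' \<in> A"
    and "ideal_class I x = ideal_class I x'" "ideal_class I y = ideal_class I y'"
  then have "ideal_cong I x x'" "ideal_cong I y y'" by (simp_all add: ideal_class_eq_iff)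
  then have "ideal_cong I (lam x y) (lam x' y')" "ideal_cong I (rho y x) (rho y' x')"
    by (simp_all add: ideal_cong_lam ideal_cong_rho)
  then show "map_prod (ideal_class I) (ideal_class I) (r (x, y)) =
      map_prod (ideal_class I) (ideal_class I) (r (x', y'))"
    using ideal_class_eq_iff ideal_cong_closed by (simp add: sb_solution_apply)
qed

end

section \<open>Consecutive ideals of prime index\<close>

definition mpow where "mpow a n = a [^]\<^bsub>mul_grp A mul zero\<^esub> (n::nat)"

lemma mpow_closed[simp]: "a \<in> A \<Longrightarrow> mpow a n \<in> A"
  using monoid.nat_pow_closed[OF group.is_monoid[OF mul_group]] unfolding mpow_def by fastforce
lemma mpow_0[simp]: "mpow a 0 = zero"
  unfolding mpow_def by simp
lemma mpow_Suc: "a \<in> A \<Longrightarrow> mpow a (Suc n) = mul a (mpow a n)"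
  using monoid.nat_pow_Suc2[OF group.is_monoid[OF mul_group]] unfolding mpow_def by fastforce

lemma funpow_lam: "a \<in> A \<Longrightarrow> b \<in> A \<Longrightarrow> (lam a ^^ k) b = lam (mpow a k) b"
  by (induction k) (simp_all add: mpow_Suc lam_mul)

lemma funpow_conj: "b \<in> A \<Longrightarrow> c \<in> A \<Longrightarrow>
  ((\<lambda>c. mul (mul b c) (minv b)) ^^ k) c = mul (mul (mpow b k) c) (minv (mpow b k))"
  by (induction k) (simp_all add: mpow_Suc)

lemma r_coset_eq_ideal_class:
  assumes I: "brace_ideal A add mul zero I" and x: "x \<in> A"
  shows "I #>\<^bsub>mul_grp A mul zero\<^esub> x = ideal_class I x"
proof -
  note normal = ideal_mul_normal[OF I]
  have "mul y (minv x) \<in> I \<longleftrightarrow> mul (minv x) y \<in> I" if y: "y \<in> A" for y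
  proof
    assume "mul y (minv x) \<in> I"
    then show "mul (minv x) y \<in> I"
      using normal.inv_op_closed1[OF normal, of x "mul y (minv x)"] x y by (simp flip: minv_def)
  next
    assume "mul (minv x) y \<in> I"
    then show "mul y (minv x) \<in> I"
      using normal.inv_op_closed2[OF normal, of x "mul (minv x) y"] x y by (simp flip: minv_def)
  qed
  note iff = this
  show ?thesis
  proof (intro equalityI subsetI)
    fix y assume "y \<in> I #>\<^bsub>mul_grp A mul zero\<^esub> x"
    then obtain i where i: "i \<in> I" "y = mul i x" by (auto simp: r_coset_def)
    then have "i \<in> A" using ideal_subset[OF I] by blast
    then show "y \<in> ideal_class I x"
      using iff[of y] i x by (simp add: ideal_class_def ideal_cong_mul_iff[OF I])
  next
    fix y assume "y \<in> ideal_class I x"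
    then have y: "y \<in> A" "mul y (minv x) \<in> I"
      using iff by (auto simp: ideal_class_def ideal_cong_mul_iff[OF I])
    moreover have "y = mul (mul y (minv x)) x" using x y by simp
    ultimately show "y \<in> I #>\<^bsub>mul_grp A mul zero\<^esub> x"
      unfolding r_coset_def by (metis UN_iff mul_grp_simps(2) singletonI)
  qed
qed

(* Lagrange's theorem in the factor group J/I of (J, o). *)
lemma mpow_card_quotient_in_ideal:
  assumes I: "brace_ideal A add mul zero I" and J: "brace_ideal A add mul zero J"
    and IJ: "I \<subseteq> J" and a: "a \<in> J"
  shows "mpow a (card (ideal_class I ` J)) \<in> I"
proof -
  let ?M = "mul_grp A mul zero"
  let ?J = "?M\<lparr>carrier := J\<rparr>"
  let ?n = "card (ideal_class I ` J)"
  have sub_J: "subgroup J ?M" by (rule ideal_mul_subgroup[OF J])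
  have group_J: "group ?J" using subgroup.subgroup_is_group[OF sub_J mul_group] .
  have normal_I: "I \<lhd> ?J"
    using group.normal_restrict_supergroup[OF mul_group sub_J ideal_mul_normal[OF I] IJ] .
  have cosets: "I #>\<^bsub>?J\<^esub> x = ideal_class I x" if "x \<in> J" for x
    using r_coset_eq_ideal_class[OF I] ideal_subset[OF J] that by (auto simp: r_coset_def)
  have "carrier (?J Mod I) = ideal_class I ` J"
    unfolding carrier_FactGroup using cosets by simp
  then have "(I #>\<^bsub>?J\<^esub> a) [^]\<^bsub>?J Mod I\<^esub> ?n = \<one>\<^bsub>?J Mod I\<^esub>"
    using group.pow_order_eq_1[OF normal.factorgroup_is_group[OF normal_I]] cosets a
    by (simp add: order_def)
  then have "I #>\<^bsub>?J\<^esub> (a [^]\<^bsub>?J\<^esub> ?n) = I"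
    using normal.FactGroup_pow[OF normal_I, of a] a by simp
  moreover have "a [^]\<^bsub>?J\<^esub> ?n = mpow a ?n"
    unfolding mpow_def by (metis monoid.nat_pow_consistent[OF group.is_monoid[OF mul_group]])
  moreover have "a [^]\<^bsub>?J\<^esub> ?n \<in> J"
    using monoid.nat_pow_closed[OF group.is_monoid[OF group_J]] a by simp
  ultimately show ?thesis
    using group.rcos_self[OF group_J, of "a [^]\<^bsub>?J\<^esub> ?n" I] normal_imp_subgroup[OF normal_I] by simp
qed

context
  fixes I assumes ideal: "brace_ideal A add mul zero I"
begin

lemma quotient_map_class:
  assumes resp: "\<And>x y. ideal_cong I x y \<Longrightarrow> ideal_cong I (h x) (h y)" and b: "b \<in> A"
  shows "quotient_map I h (ideal_class I b) = ideal_class I (h b)"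
proof -
  let ?b = "inv_into A (ideal_class I) (ideal_class I b)"
  have "ideal_class I b \<in> ideal_class I ` A" using b by simp
  then have "?b \<in> A" "ideal_class I ?b = ideal_class I b"
    by (rule inv_into_into, rule f_inv_into_f)
  then have cong: "ideal_cong I (h ?b) (h b)"
    using b resp ideal_class_eq_iff[OF ideal] by blast
  then show ?thesis
    unfolding quotient_map_def
    using ideal_class_eq_iff[OF ideal, of "h ?b" "h b"] ideal_cong_closed[OF ideal cong] by simp
qed

lemma funpow_quotient_map:
  assumes resp: "\<And>x y. ideal_cong I x y \<Longrightarrow> ideal_cong I (h x) (h y)"
    and closed: "\<And>x. x \<in> A \<Longrightarrow> h x \<in> A" and b: "b \<in> A"
  shows "(quotient_map I h ^^ k) (ideal_class I b) = ideal_class I ((h ^^ k) b)"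
proof (induction k)
  case (Suc k)
  have "(h ^^ k) b \<in> A" using closed b by (rule funpow_closed)
  then show ?case using Suc quotient_map_class[OF resp] by simp
qed simp

end

end

locale prime_index_ideals = skew_brace_struct +
  fixes I J
  assumes finite: "finite A"
    and ideal_I: "brace_ideal A add mul zero I" and ideal_J: "brace_ideal A add mul zero J"
    and subset: "I \<subseteq> J" and prime_index: "prime (card J div card I)"
begin

abbreviation "cls \<equiv> ideal_class I"

lemma J_subset: "J \<subseteq> A"
  using ideal_subset[OF ideal_J] .

lemma ideal_class_subset_J: "x \<in> J \<Longrightarrow> cls x \<subseteq> J"
  using subset J_subset ideal_add_closed[OF ideal_J]
  by (force simp: ideal_class_eq_add_image[OF ideal_I])

lemma card_J: "card J = card I * card (cls ` J)"
proof -
  have union: "\<Union> (cls ` J) = J"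
    using ideal_class_subset_J mem_ideal_class_self[OF ideal_I] J_subset by blast
  have "card I * card (cls ` J) = card (\<Union> (cls ` J))"
  proof (rule card_partition)
    show "finite (cls ` J)" "finite (\<Union> (cls ` J))"
      using finite_subset[OF J_subset finite] union by auto
    show "\<And>c. c \<in> cls ` J \<Longrightarrow> card c = card I"
      using card_ideal_class[OF ideal_I] J_subset by auto
    show "\<And>c1 c2. c1 \<in> cls ` J \<Longrightarrow> c2 \<in> cls ` J \<Longrightarrow> c1 \<noteq> c2 \<Longrightarrow> c1 \<inter> c2 = {}"
      using ideal_class_disjoint[OF ideal_I] J_subset by auto
  qed
  with union show ?thesis by simp
qed

lemma prime_card_quotient: "prime (card (cls ` J))"
proof -
  have "card I > 0"
    using zero_in_ideal[OF ideal_I] finite_subset[OF ideal_subset[OF ideal_I] finite] card_gt_0_iff by blast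
  then show ?thesis using prime_index card_J by simp
qed

lemma ideal_class_fixed_if_periodic:
  assumes resp: "\<And>x y. ideal_cong I x y \<Longrightarrow> ideal_cong I (h x) (h y)"
    and closed_A: "\<And>x. x \<in> A \<Longrightarrow> h x \<in> A" and closed_J: "\<And>x. x \<in> J \<Longrightarrow> h x \<in> J"
    and h_zero: "h zero = zero"
    and periodic: "\<And>b. b \<in> J \<Longrightarrow> ideal_cong I ((h ^^ card (cls ` J)) b) b"
    and b: "b \<in> J"
  shows "cls (h b) = cls b"
proof -
  note class_map = quotient_map_class[OF ideal_I resp]
  have "quotient_map I h (cls b) = cls b"
  proof (rule prime_card_periodic_map_fixed[OF _ prime_card_quotient])
    show "finite (cls ` J)" using finite_subset[OF J_subset finite] by simp
    show "cls zero \<in> cls ` J" "quotient_map I h (cls zero) = cls zero"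
      using zero_in_ideal[OF ideal_J] class_map h_zero by auto
    show "quotient_map I h C \<in> cls ` J" if "C \<in> cls ` J" for C
      using that class_map closed_J J_subset by auto
    show "(quotient_map I h ^^ card (cls ` J)) C = C" if "C \<in> cls ` J" for C
    proof -
      obtain c where c: "c \<in> J" "C = cls c" using \<open>C \<in> cls ` J\<close> by auto
      have cong: "ideal_cong I ((h ^^ card (cls ` J)) c) c" using periodic[OF c(1)] .
      have "(quotient_map I h ^^ card (cls ` J)) C = cls ((h ^^ card (cls ` J)) c)"
        using funpow_quotient_map[OF ideal_I resp closed_A] c J_subset by auto
      also have "\<dots> = C"
        using ideal_class_eq_iff[OF ideal_I] ideal_cong_closed[OF ideal_I cong] cong c by simp
      finally show ?thesis .
    qed
    show "cls b \<in> cls ` J" using b by simp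
  qed
  then show ?thesis using class_map b J_subset by auto
qed

lemma lam_ideal_class:
  assumes a: "a \<in> J" and b: "b \<in> J"
  shows "cls (lam a b) = cls b"
proof (rule ideal_class_fixed_if_periodic[OF _ _ _ _ _ b])
  have aA: "a \<in> A" using a J_subset by auto
  show "ideal_cong I (lam a x) (lam a y)" if "ideal_cong I x y" for x y
    using ideal_cong_lam[OF ideal_I ideal_cong_refl[OF ideal_I aA] that] .
  show "lam a x \<in> A" if "x \<in> A" for x using that aA by simp
  show "lam a x \<in> J" if "x \<in> J" for x using that lam_image_ideal[OF ideal_J aA] by blast
  show "lam a zero = zero" using aA by simp
  show "ideal_cong I ((lam a ^^ card (cls ` J)) c) c" if c: "c \<in> J" for c
  proof -
    have cA: "c \<in> A" using c J_subset by auto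
    have "ideal_cong I (mpow a (card (cls ` J))) zero"
      using mpow_card_quotient_in_ideal[OF ideal_I ideal_J subset a]
      by (simp add: ideal_cong_zero_iff[OF ideal_I] ideal_cong_sym[OF ideal_I])
    then have "ideal_cong I (lam (mpow a (card (cls ` J))) c) (lam zero c)"
      using ideal_cong_lam[OF ideal_I _ ideal_cong_refl[OF ideal_I cA]] by blast
    then show ?thesis using funpow_lam[OF aA cA] cA by simp
  qed
qed

lemma conj_ideal_class:
  assumes b: "b \<in> J" and c: "c \<in> J"
  shows "cls (mul (mul b c) (minv b)) = cls c"
proof (rule ideal_class_fixed_if_periodic[OF _ _ _ _ _ c])
  have bA: "b \<in> A" using b J_subset by auto
  show "ideal_cong I (mul (mul b x) (minv b)) (mul (mul b y) (minv b))" if "ideal_cong I x y" for x y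
    using ideal_cong_mul[OF ideal_I ideal_cong_mul[OF ideal_I ideal_cong_refl[OF ideal_I bA] that]
        ideal_cong_refl[OF ideal_I minv_closed[OF bA]]] .
  show "mul (mul b x) (minv b) \<in> A" if "x \<in> A" for x using that bA by simp
  show "mul (mul b x) (minv b) \<in> J" if "x \<in> J" for x
    using that b ideal_mul_closed[OF ideal_J] ideal_minv_closed[OF ideal_J] by blast
  show "mul (mul b zero) (minv b) = zero" using bA by simp
  show "ideal_cong I (((\<lambda>c. mul (mul b c) (minv b)) ^^ card (cls ` J)) d) d" if d: "d \<in> J" for d
  proof -
    let ?bn = "mpow b (card (cls ` J))"
    have dA: "d \<in> A" using d J_subset by auto
    have "ideal_cong I ?bn zero"
      using mpow_card_quotient_in_ideal[OF ideal_I ideal_J subset b]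
      by (simp add: ideal_cong_zero_iff[OF ideal_I] ideal_cong_sym[OF ideal_I])
    then have "ideal_cong I (mul (mul ?bn d) (minv ?bn)) (mul (mul zero d) (minv zero))"
      using ideal_cong_mul[OF ideal_I ideal_cong_mul[OF ideal_I _ ideal_cong_refl[OF ideal_I dA]]
          ideal_cong_minv[OF ideal_I]] by blast
    then show ?thesis using funpow_conj[OF bA dA] dA by simp
  qed
qed

lemma rho_ideal_class:
  assumes a: "a \<in> J" and b: "b \<in> J"
  shows "cls (rho b a) = cls a"
proof -
  have aA: "a \<in> A" and bA: "b \<in> A" using a b J_subset by auto
  have "ideal_cong I (lam a b) b"
    using lam_ideal_class[OF a b] ideal_class_eq_iff[OF ideal_I] aA bA by simp
  then have "ideal_cong I (rho b a) (mul (mul (minv b) a) b)"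
    unfolding rho_def
    using ideal_cong_mul[OF ideal_I ideal_cong_mul[OF ideal_I ideal_cong_minv[OF ideal_I]
          ideal_cong_refl[OF ideal_I aA]] ideal_cong_refl[OF ideal_I bA]]
    by blast
  moreover have "cls (mul (mul (minv b) a) (minv (minv b))) = cls a"
    using conj_ideal_class[OF ideal_minv_closed[OF ideal_J b] a] .
  ultimately show ?thesis
    using ideal_class_eq_iff[OF ideal_I] ideal_cong_closed[OF ideal_I] bA by (metis minv_minv)
qed

lemma trivial_quotient_solution: "trivial_solution (cls ` J) (quotient_solution A r cls)"
  unfolding trivial_solution_def
proof (intro conjI ballI)
  show "2 \<le> card (cls ` J)" using prime_card_quotient prime_ge_2_nat by blast
  fix U V assume "U \<in> cls ` J" "V \<in> cls ` J"
  then obtain a b where ab: "a \<in> J" "b \<in> J" "U = cls a" "V = cls b" by auto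
  then have "quotient_solution A r cls (U, V) = (cls (lam a b), cls (rho b a))"
    using solution_congruence.quotient_solution_apply[OF solution_congruence_ideal_class[OF ideal_I finite]]
      J_subset by (auto simp: sb_solution_apply)
  then show "quotient_solution A r cls (U, V) = (V, U)"
    using lam_ideal_class rho_ideal_class ab by simp
qed

lemma supersoluble_layer_ideals:
  "supersoluble_layer A r I J (cls ` A) (quotient_solution A r cls) cls"
proof -
  interpret solution_congruence A r cls
    by (rule solution_congruence_ideal_class[OF ideal_I finite])
  have classes: "fclass A cls x = cls x" if "x \<in> A" for x
    using fclass_ideal_class[OF ideal_I that] .
  moreover have "fclass A cls x \<subseteq> J" if "x \<in> J" for x
    using that classes ideal_class_subset_J J_subset by auto
  ultimately show ?thesis
    unfolding supersoluble_layer_def sol_lambda_sb_solution sol_rho_sb_solution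
    using solution_quotient sol_morphism_quotient ideal_class_zero[OF ideal_I]
      card_ideal_class[OF ideal_I] J_subset lam_image_ideal[OF ideal_J] rho_image_ideal[OF ideal_J]
      prime_card_quotient trivial_quotient_solution
    by (auto intro: bexI[of _ zero])
qed

end

theorem theorem2p5:
  fixes A :: "'a set" and add mul :: "'a \<Rightarrow> 'a \<Rightarrow> 'a" and zero :: 'a
  assumes "skew_brace A add mul zero"
    and "finite A"
    and "supersoluble_brace A add mul zero"
  shows "supersoluble_at A (sb_solution A add mul zero) zero"
proof -
  interpret skew_brace_struct A add mul zero by unfold_locales (fact assms(1))
  obtain Is m where chain: "Is 0 = {zero}" "Is m = A"
    and ideals: "\<And>i. i \<le> m \<Longrightarrow> brace_ideal A add mul zero (Is i)"
    and steps: "\<And>i. i < m \<Longrightarrow> Is i \<subseteq> Is (Suc i) \<and> prime (card (Is (Suc i)) div card (Is i))"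
    using assms(3) unfolding supersoluble_brace_def by blast
  have "prime_index_ideals A add mul zero (Is i) (Is (Suc i))" if "i < m" for i
    using that assms(2) ideals steps by unfold_locales auto
  then show ?thesis
    by (intro supersoluble_atI[OF assms(2) solution_sb_solution[OF assms(2)] zero_closed chain,
          where Ys = "\<lambda>i. ideal_class (Is i) ` A" and ss = "\<lambda>i. quotient_solution A r (ideal_class (Is i))"
            and fs = "\<lambda>i. ideal_class (Is i)"]
        prime_index_ideals.supersoluble_layer_ideals)
      (simp_all add: steps)
qed

end
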